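(* Let $M$ be a Maya diagram with partition $\lambda\neq\emptyset$, and let $D$ be the set of critical degrees of $M$. Then: (i) if $q_1,q_2\in D$ then $q_1+q_2\in D$; (ii) with $q_c=\lambda_1+\ell$, where $\ell$ is the length of $\lambda$, every integer $q\ge q_c$ belongs to $D$, while $q_c-1\notin D$. Moreover $D$ depends only on $\lambda$ (i.e. $M$ and $M+n$ have the same critical degrees for all $n\in\mathbb{Z}$).
   Context: A Maya diagram is a set $M\subset\mathbb{Z}$ such that $K_M^+=\{m\in M: m\ge 0\}$ and $K_M^-=\{m\in\mathbb{Z}\setminus M: m<0\}$ are finite; its index is $\sigma_M=\#K_M^+-\#K_M^-$, and $M+n=\{m+n:m\in M\}$. For a partition $\lambda$ (non-increasing non-negative integer sequence, eventually $0$; length $\ell$ = number of nonzero parts) let $M^{(\lambda)}=\{\lambda_i-i:i\ge1\}$; every Maya diagram equals $M^{(\lambda)}+\sigma_M$ for a unique partition $\lambda$, called the partition of $M$. A positive integer $q$ is a critical degree of $M$ ($M$ is a $q$-core) if $M\subset M+q$. *)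

theory Defs
  imports Main
begin

definition maya :: "int set \<Rightarrow> bool" where
  "maya M \<longleftrightarrow> finite {m \<in> M. m \<ge> 0} \<and> finite {m. m < 0 \<and> m \<notin> M}"

definition maya_index :: "int set \<Rightarrow> int" where
  "maya_index M = int (card {m \<in> M. m \<ge> 0}) - int (card {m. m < 0 \<and> m \<notin> M})"

definition shift :: "int set \<Rightarrow> int \<Rightarrow> int set" where
  "shift M n = (\<lambda>m. m + n) ` M"

(* A partition lambda_1 >= lambda_2 >= ... is encoded 0-based: lam i = lambda_(i+1). *)
definition is_partition :: "(nat \<Rightarrow> nat) \<Rightarrow> bool" where
  "is_partition lam \<longleftrightarrow> (\<forall>i. lam (Suc i) \<le> lam i) \<and> finite {i. lam i \<noteq> 0}"

definition part_length :: "(nat \<Rightarrow> nat) \<Rightarrow> nat" where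
  "part_length lam = card {i. lam i \<noteq> 0}"

definition maya_of_partition :: "(nat \<Rightarrow> nat) \<Rightarrow> int set" where
  "maya_of_partition lam = {int (lam i) - int (Suc i) | i. True}"

definition partition_of :: "int set \<Rightarrow> (nat \<Rightarrow> nat) \<Rightarrow> bool" where
  "partition_of M lam \<longleftrightarrow> is_partition lam \<and> M = shift (maya_of_partition lam) (maya_index M)"

definition critical_degree :: "int set \<Rightarrow> nat \<Rightarrow> bool" where
  "critical_degree M q \<longleftrightarrow> q > 0 \<and> M \<subseteq> shift M (int q)"

end

theory Submission
  imports Defs
begin

text \<open>Since shifts commute, \<open>M \<subseteq> M + q\<close> is invariant under replacing \<open>M\<close> by a shift of it, so
  it suffices to study the diagram \<open>N = {\<lambda>\<^sub>i - i}\<close> of the partition. It contains every \<open>m < -\<ell>\<close>,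
  misses \<open>-\<ell>\<close>, and has maximum \<open>\<lambda>\<^sub>1 - 1\<close>. Hence \<open>N \<subseteq> N + q\<close> as soon as \<open>q \<ge> \<lambda>\<^sub>1 + \<ell>\<close>
  (everything in \<open>N - q\<close> lies below \<open>-\<ell>\<close>), whereas for \<open>q = \<lambda>\<^sub>1 + \<ell> - 1\<close> the maximum is moved
  onto the hole \<open>-\<ell>\<close>. Closure under addition comes from chaining \<open>M \<subseteq> M + q\<^sub>2 \<subseteq> M + q\<^sub>2 + q\<^sub>1\<close>.\<close>

lemma shift_shift: "shift (shift M a) b = shift M (a + b)"
  unfolding shift_def by (auto simp: image_image add.assoc)

lemma shift_subset_shift_iff: "shift A n \<subseteq> shift B n \<longleftrightarrow> A \<subseteq> B"
  unfolding shift_def by auto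

lemma mem_shift_iff: "x \<in> shift M n \<longleftrightarrow> x - n \<in> M"
  unfolding shift_def by (auto intro: image_eqI[where x = "x - n"])

lemma critical_degree_shift_iff: "critical_degree (shift M n) q \<longleftrightarrow> critical_degree M q"
proof -
  have "shift (shift M n) (int q) = shift (shift M (int q)) n"
    by (simp add: shift_shift add.commute)
  then show ?thesis
    unfolding critical_degree_def by (metis shift_subset_shift_iff)
qed

lemma critical_degree_add:
  assumes "critical_degree M q1" and "critical_degree M q2"
  shows "critical_degree M (q1 + q2)"
proof -
  have "M \<subseteq> shift M (int q2)" and "shift M (int q2) \<subseteq> shift (shift M (int q1)) (int q2)"
    using assms shift_subset_shift_iff unfolding critical_degree_def by blast+
  then have "M \<subseteq> shift M (int (q1 + q2))"
    by (simp add: shift_shift)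
  with assms show ?thesis
    unfolding critical_degree_def by simp
qed

lemma partition_antimono:
  assumes "is_partition lam" and "i \<le> j"
  shows "lam j \<le> lam i"
  using assms lift_Suc_antimono_le[of lam] unfolding is_partition_def by blast

lemma partition_nonzero_iff:
  assumes "is_partition lam"
  shows "lam i \<noteq> 0 \<longleftrightarrow> i < part_length lam"
proof -
  let ?S = "{i. lam i \<noteq> 0}"
  have "finite ?S"
    using assms unfolding is_partition_def by blast
  then obtain n where "n \<notin> ?S"
    using ex_new_if_finite[OF infinite_UNIV_nat] by blast
  define k where "k = (LEAST n. n \<notin> ?S)"
  have "k \<notin> ?S"
    unfolding k_def by (rule LeastI[of _ n]) fact
  have "?S = {..<k}"
  proof
    show "?S \<subseteq> {..<k}"
      using \<open>k \<notin> ?S\<close> partition_antimono[OF assms] by (force simp: not_less)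
    show "{..<k} \<subseteq> ?S"
      using not_less_Least[of _ "\<lambda>n. n \<notin> ?S"] unfolding k_def by blast
  qed
  then show ?thesis
    unfolding part_length_def by auto
qed

lemma mem_maya_of_partition_iff:
  "m \<in> maya_of_partition lam \<longleftrightarrow> (\<exists>i. m = int (lam i) - int (Suc i))"
  unfolding maya_of_partition_def by auto

lemma maya_of_partition_le:
  assumes "is_partition lam" and "m \<in> maya_of_partition lam"
  shows "m \<le> int (lam 0) - 1"
proof -
  obtain i where "m = int (lam i) - int (Suc i)"
    using assms(2) unfolding mem_maya_of_partition_iff by blast
  moreover have "lam i \<le> lam 0"
    using partition_antimono[OF assms(1)] by simp
  ultimately show ?thesis
    by simp
qed

lemma max_in_maya_of_partition: "int (lam 0) - 1 \<in> maya_of_partition lam"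
  unfolding mem_maya_of_partition_iff by (intro exI[of _ 0]) simp

lemma below_length_in_maya_of_partition:
  assumes "is_partition lam" and "m < - int (part_length lam)"
  shows "m \<in> maya_of_partition lam"
proof -
  define i where "i = nat (- m - 1)"
  have "lam i = 0"
    using assms partition_nonzero_iff[OF assms(1), of i] unfolding i_def by linarith
  moreover have "m = - int (Suc i)"
    using assms unfolding i_def by simp
  ultimately show ?thesis
    unfolding mem_maya_of_partition_iff by (intro exI[of _ i]) simp
qed

lemma neg_length_notin_maya_of_partition:
  assumes "is_partition lam"
  shows "- int (part_length lam) \<notin> maya_of_partition lam"
proof
  assume "- int (part_length lam) \<in> maya_of_partition lam"
  then obtain i where i: "- int (part_length lam) = int (lam i) - int (Suc i)"
    unfolding mem_maya_of_partition_iff by blast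
  show False
    using i partition_nonzero_iff[OF assms, of i] by (cases "lam i = 0") auto
qed

lemma critical_degree_maya_of_partition:
  assumes "is_partition lam" and "q \<ge> lam 0 + part_length lam" and "q > 0"
  shows "critical_degree (maya_of_partition lam) q"
proof -
  have q: "int q \<ge> int (lam 0) + int (part_length lam)"
    using assms(2) by linarith
  have "m - int q \<in> maya_of_partition lam" if "m \<in> maya_of_partition lam" for m
  proof (rule below_length_in_maya_of_partition[OF assms(1)])
    show "m - int q < - int (part_length lam)"
      using q maya_of_partition_le[OF assms(1) that] by linarith
  qed
  with assms(3) show ?thesis
    unfolding critical_degree_def subset_iff mem_shift_iff by blast
qed

lemma not_critical_degree_maya_of_partition:
  assumes "is_partition lam"
  shows "\<not> critical_degree (maya_of_partition lam) (lam 0 + part_length lam - 1)"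
proof
  let ?q = "lam 0 + part_length lam - 1"
  assume crit: "critical_degree (maya_of_partition lam) ?q"
  then have "int (lam 0) - 1 - int ?q \<in> maya_of_partition lam"
    using max_in_maya_of_partition unfolding critical_degree_def subset_iff mem_shift_iff by blast
  moreover have "int (lam 0) - 1 - int ?q = - int (part_length lam)"
    \<comment> \<open>\<open>?q > 0\<close>, so the natural subtraction in \<open>?q\<close> does not truncate\<close>
    using crit unfolding critical_degree_def by simp
  ultimately show False
    using neg_length_notin_maya_of_partition[OF assms] by simp
qed

theorem mainTheorem5:
  fixes M :: "int set" and lam :: "nat \<Rightarrow> nat"
  assumes "maya M"
    and "partition_of M lam"
    and "lam 0 \<noteq> 0"
  shows "(\<forall>q1 q2. critical_degree M q1 \<longrightarrow> critical_degree M q2 \<longrightarrow> critical_degree M (q1 + q2))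
    \<and> (\<forall>q. q \<ge> lam 0 + part_length lam \<longrightarrow> critical_degree M q)
    \<and> \<not> critical_degree M (lam 0 + part_length lam - 1)
    \<and> (\<forall>n q. critical_degree (shift M n) q \<longleftrightarrow> critical_degree M q)"
proof -
  have lam: "is_partition lam" and M: "M = shift (maya_of_partition lam) (maya_index M)"
    using assms(2) unfolding partition_of_def by auto
  have critical_M: "critical_degree M q \<longleftrightarrow> critical_degree (maya_of_partition lam) q" for q
    by (subst M) (rule critical_degree_shift_iff)
  have "q > 0" if "q \<ge> lam 0 + part_length lam" for q
    using that assms(3) by simp
  then show ?thesis
    using critical_degree_add critical_degree_shift_iff critical_M
      critical_degree_maya_of_partition[OF lam] not_critical_degree_maya_of_partition[OF lam]
    by blast
qed

end
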